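(* Let $\mathcal{R}:\mathcal{D}\to\mathcal{S}$ be a deletion $(\varepsilon,\delta)$-DP local randomizer with reference distribution $\rho$. Then there exists a randomizer $\mathcal{R}':\mathcal{D}\to\mathcal{S}$ that is a deletion $\varepsilon$-DP local randomizer with the same reference distribution $\rho$, such that for all $x\in\mathcal{D}$, $\mathrm{TV}(\mathcal{R}(x),\mathcal{R}'(x))\le\delta$. In particular, $\mathcal{R}'$ is a (replacement) $2\varepsilon$-DP local randomizer.
   Context: Two random variables $P,Q$ on the same space are $(\varepsilon,\delta)$-indistinguishable if for every event $E$, $e^{-\varepsilon}(\Pr(Q\in E)-\delta)\le\Pr(P\in E)\le e^{\varepsilon}\Pr(Q\in E)+\delta$. An algorithm $\mathcal{R}:\mathcal{D}\to\mathcal{S}$ is a deletion $(\varepsilon,\delta)$-DP local randomizer if there exists a distribution $\rho$ on $\mathcal{S}$ (the reference distribution) such that for all $x\in\mathcal{D}$, $\mathcal{R}(x)$ and $\rho$ are $(\varepsilon,\delta)$-indistinguishable; deletion $\varepsilon$-DP means $\delta=0$. A (replacement) $(\varepsilon,\delta)$-DP local randomizer is one for which $\mathcal{R}(x)$ and $\mathcal{R}(x')$ are $(\varepsilon,\delta)$-indistinguishable for all $x,x'\in\mathcal{D}$. $\mathrm{TV}$ denotes total variation distance. *)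

theory Defs
  imports "HOL-Probability.Probability"
begin

definition is_dist :: "'s measure \<Rightarrow> 's measure \<Rightarrow> bool" where
  "is_dist M P \<longleftrightarrow> prob_space P \<and> sets P = sets M"

definition indist :: "'s measure \<Rightarrow> real \<Rightarrow> real \<Rightarrow> 's measure \<Rightarrow> 's measure \<Rightarrow> bool" where
  "indist M \<epsilon> \<delta> P Q \<longleftrightarrow>
     (\<forall>E \<in> sets M.
        exp (-\<epsilon>) * (measure Q E - \<delta>) \<le> measure P E \<and>
        measure P E \<le> exp \<epsilon> * measure Q E + \<delta>)"

definition deletion_DP_LR ::
  "'s measure \<Rightarrow> real \<Rightarrow> real \<Rightarrow> ('d \<Rightarrow> 's measure) \<Rightarrow> 's measure \<Rightarrow> bool" where
  "deletion_DP_LR M \<epsilon> \<delta> R \<rho> \<longleftrightarrow>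
     is_dist M \<rho> \<and> (\<forall>x. is_dist M (R x)) \<and> (\<forall>x. indist M \<epsilon> \<delta> (R x) \<rho>)"

definition replacement_DP_LR ::
  "'s measure \<Rightarrow> real \<Rightarrow> real \<Rightarrow> ('d \<Rightarrow> 's measure) \<Rightarrow> bool" where
  "replacement_DP_LR M \<epsilon> \<delta> R \<longleftrightarrow>
     (\<forall>x. is_dist M (R x)) \<and> (\<forall>x x'. indist M \<epsilon> \<delta> (R x) (R x'))"

definition TV :: "'s measure \<Rightarrow> 's measure \<Rightarrow> 's measure \<Rightarrow> real" where
  "TV M P Q = (SUP E \<in> sets M. \<bar>measure P E - measure Q E\<bar>)"

end

theory Submission
  imports Defs
begin

text \<open>Write the randomizer output P and the reference Q as densities p, q with respect to a
  common dominating measure. The deletion guarantee says that the mass a of p above the band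
  [exp(-\<epsilon>) q, exp(\<epsilon>) q] and the mass b of p below it are both at most \<delta>. Clipping p into
  the band changes its total mass by b - a; moving the clipped density linearly towards the
  band's upper (if a \<ge> b) or lower (if a < b) edge restores mass 1 while staying in the band.
  Then p' \<ge> p minus the part clipped from above (resp. p' \<le> p plus the part lifted from
  below), and p, p' have equal mass, so P and P' differ by at most \<delta> on every event.
  Two pure \<epsilon>-indistinguishabilities with the common reference \<rho> compose to a
  2\<epsilon>-indistinguishability.\<close>

lemma indist_zero_common_reference:
  assumes PR: "indist M \<epsilon> 0 P R" and QR: "indist M \<epsilon> 0 Q R"
  shows "indist M (2 * \<epsilon>) 0 P Q"
  unfolding indist_def
proof (intro ballI conjI)
  fix E assume E: "E \<in> sets M"
  have P: "exp (-\<epsilon>) * measure R E \<le> measure P E" "measure P E \<le> exp \<epsilon> * measure R E"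
    using PR E unfolding indist_def by auto
  have Q: "exp (-\<epsilon>) * measure R E \<le> measure Q E" "measure Q E \<le> exp \<epsilon> * measure R E"
    using QR E unfolding indist_def by auto
  have R_le: "measure R E \<le> exp \<epsilon> * measure Q E"
    using mult_left_mono[OF Q(1), of "exp \<epsilon>"] by (simp add: exp_minus field_simps)
  have le_R: "exp (-\<epsilon>) * measure Q E \<le> measure R E"
    using mult_left_mono[OF Q(2), of "exp (-\<epsilon>)"] by (simp add: exp_minus field_simps)
  have "measure P E \<le> exp \<epsilon> * (exp \<epsilon> * measure Q E)"
    using order_trans[OF P(2) mult_left_mono[OF R_le]] by simp
  then show "measure P E \<le> exp (2 * \<epsilon>) * measure Q E + 0"
    by (simp add: exp_add[symmetric] mult.assoc[symmetric])
  have "exp (-\<epsilon>) * (exp (-\<epsilon>) * measure Q E) \<le> measure P E"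
    using order_trans[OF mult_left_mono[OF le_R] P(1)] by simp
  then show "exp (-(2 * \<epsilon>)) * (measure Q E - 0) \<le> measure P E"
    by (simp add: exp_add[symmetric] mult.assoc[symmetric])
qed

lemma
  fixes f :: "'a \<Rightarrow> real"
  assumes [measurable]: "f \<in> borel_measurable N" and nonneg: "\<And>y. 0 \<le> f y"
    and "integrable N f" and E: "E \<in> sets N"
  shows emeasure_density_real: "emeasure (density N f) E = ennreal (\<integral>y. f y * indicator E y \<partial>N)"
    and measure_density_real: "measure (density N f) E = (\<integral>y. f y * indicator E y \<partial>N)"
proof -
  have "emeasure (density N f) E = (\<integral>\<^sup>+y. ennreal (f y * indicator E y) \<partial>N)"
    using E by (auto simp: emeasure_density intro!: nn_integral_cong split: split_indicator)
  also have "\<dots> = ennreal (\<integral>y. f y * indicator E y \<partial>N)"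
    using assms by (intro nn_integral_eq_integral) (auto intro!: integrable_real_mult_indicator)
  finally show *: "emeasure (density N f) E = ennreal (\<integral>y. f y * indicator E y \<partial>N)" .
  have "0 \<le> (\<integral>y. f y * indicator E y \<partial>N)"
    using nonneg by (intro Bochner_Integration.integral_nonneg) auto
  with * show "measure (density N f) E = (\<integral>y. f y * indicator E y \<partial>N)"
    by (simp add: measure_def)
qed

lemma absolutely_continuous_real_density:
  assumes N: "finite_measure N" and P: "prob_space P" and sets_P: "sets P = sets N"
    and ac: "absolutely_continuous N P"
  obtains p :: "'a \<Rightarrow> real"
  where "p \<in> borel_measurable N" "\<And>y. 0 \<le> p y" "integrable N p" "P = density N p"
proof -
  interpret N: finite_measure N by fact
  interpret P: prob_space P by fact
  define p where "p y = enn2real (RN_deriv N P y)" for y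
  have [measurable]: "p \<in> borel_measurable N" unfolding p_def by measurable
  have "AE y in N. RN_deriv N P y \<noteq> \<infinity>"
    by (rule N.RN_deriv_finite[OF _ ac sets_P]) unfold_locales
  then have "AE y in N. RN_deriv N P y = ennreal (p y)"
    by eventually_elim (auto simp: p_def less_top)
  then have "density N (RN_deriv N P) = density N p"
    by (intro density_cong) auto
  then have P_eq: "P = density N p"
    using N.density_RN_deriv[OF ac sets_P] by simp
  have "(\<integral>\<^sup>+y. ennreal (p y) \<partial>N) = emeasure (density N p) (space N)"
    by (simp add: emeasure_density)
  also have "\<dots> = 1"
    using P_eq P.emeasure_space_1 sets_eq_imp_space_eq[OF sets_P] by simp
  finally have "integrable N p"
    by (intro integrableI_nn_integral_finite[where x = 1]) (auto simp: p_def)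
  moreover have "0 \<le> p y" for y
    by (simp add: p_def)
  ultimately show thesis
    using P_eq that by blast
qed

lemma sup_measure'_dominates:
  assumes P: "prob_space P" and Q: "prob_space Q" and sets_eq: "sets Q = sets P"
  shows "finite_measure (sup_measure' P Q)"
    and "absolutely_continuous (sup_measure' P Q) P"
    and "absolutely_continuous (sup_measure' P Q) Q"
proof -
  interpret P: prob_space P by fact
  interpret Q: prob_space Q by fact
  have "emeasure (sup_measure' P Q) (space P) \<le> emeasure P (space P) + emeasure Q (space P)"
    unfolding emeasure_sup_measure'[OF sets_eq sets.top]
    by (intro SUP_least add_mono emeasure_mono) (auto simp: sets_eq dest: sets.sets_into_space)
  also have "\<dots> < \<infinity>"
    using Q.emeasure_space_1 sets_eq_imp_space_eq[OF sets_eq] by (simp add: P.emeasure_space_1)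
  finally show "finite_measure (sup_measure' P Q)"
    using sets_eq by (intro finite_measureI) auto
  show "absolutely_continuous (sup_measure' P Q) P" "absolutely_continuous (sup_measure' P Q) Q"
    using le_emeasure_sup_measure'1[OF sets_eq] le_emeasure_sup_measure'2[OF sets_eq] sets_eq
    by (force simp: absolutely_continuous_def null_sets_def)+
qed

lemma set_integral_diff_le_defect:
  fixes f g h :: "'a \<Rightarrow> real"
  assumes f: "integrable N f" and g: "integrable N g" and h: "integrable N h"
    and same_total: "integral\<^sup>L N f = integral\<^sup>L N g"
    and defect: "\<And>y. y \<in> space N \<Longrightarrow> f y - h y \<le> g y" and h_nonneg: "\<And>y. 0 \<le> h y"
    and E: "E \<in> sets N"
  shows "\<bar>(\<integral>y. f y * indicator E y \<partial>N) - (\<integral>y. g y * indicator E y \<partial>N)\<bar> \<le> integral\<^sup>L N h"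
proof -
  let ?fE = "\<lambda>y. f y * indicator E y" and ?gE = "\<lambda>y. g y * indicator E y"
  have iE: "integrable N ?fE" "integrable N ?gE"
    using E f g by (auto intro!: integrable_real_mult_indicator)
  have "integral\<^sup>L N ?fE - integral\<^sup>L N ?gE = (\<integral>y. ?fE y - ?gE y \<partial>N)"
    using iE by simp
  also have "\<dots> \<le> integral\<^sup>L N h"
    using iE h h_nonneg by (intro integral_mono) (auto split: split_indicator dest!: defect)
  finally have "integral\<^sup>L N ?fE - integral\<^sup>L N ?gE \<le> integral\<^sup>L N h" .
  moreover have "integral\<^sup>L N ?gE - integral\<^sup>L N ?fE
      = (\<integral>y. (f y - g y) - (?fE y - ?gE y) \<partial>N)"
    using iE f g same_total by simp
  moreover have "\<dots> \<le> integral\<^sup>L N h"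
    using iE f g h h_nonneg by (intro integral_mono) (auto split: split_indicator dest!: defect)
  ultimately show ?thesis by linarith
qed

lemma integral_interpolation_eq:
  fixes f g :: "'a \<Rightarrow> real"
  assumes "integrable N f" "integrable N g"
    and "integral\<^sup>L N f \<le> v" "v \<le> integral\<^sup>L N g"
  obtains t where "0 \<le> t" "t \<le> 1" "(\<integral>y. f y + t * (g y - f y) \<partial>N) = v"
proof -
  define t where "t = (if integral\<^sup>L N g = integral\<^sup>L N f then 0
      else (v - integral\<^sup>L N f) / (integral\<^sup>L N g - integral\<^sup>L N f))"
  have "0 \<le> t" "t \<le> 1" "integral\<^sup>L N f + t * (integral\<^sup>L N g - integral\<^sup>L N f) = v"
    using assms by (auto simp: t_def field_simps)
  with assms show thesis
    by (intro that[of t]) auto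
qed

lemma interpolation_bounds:
  fixes a b t :: real
  assumes "a \<le> b" "0 \<le> t" "t \<le> 1"
  shows "a \<le> a + t * (b - a)" "a + t * (b - a) \<le> b"
  using assms mult_left_le_one_le[of "b - a" t] by auto

lemma density_into_ratio_band:
  fixes p q :: "'a \<Rightarrow> real"
  assumes [measurable]: "p \<in> borel_measurable N" "q \<in> borel_measurable N"
    and q_nonneg: "\<And>y. 0 \<le> q y" and p: "integrable N p" and q: "integrable N q"
    and p1: "integral\<^sup>L N p = 1" and q1: "integral\<^sup>L N q = 1"
    and up: "\<And>E. E \<in> sets N \<Longrightarrow>
      (\<integral>y. p y * indicator E y \<partial>N) \<le> exp \<epsilon> * (\<integral>y. q y * indicator E y \<partial>N) + \<delta>"
    and lo: "\<And>E. E \<in> sets N \<Longrightarrow>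
      exp (-\<epsilon>) * ((\<integral>y. q y * indicator E y \<partial>N) - \<delta>) \<le> (\<integral>y. p y * indicator E y \<partial>N)"
    and "0 \<le> \<epsilon>"
  obtains p' where "p' \<in> borel_measurable N" "integrable N p'" "integral\<^sup>L N p' = 1"
    "\<And>y. exp (-\<epsilon>) * q y \<le> p' y" "\<And>y. p' y \<le> exp \<epsilon> * q y"
    "\<And>E. E \<in> sets N \<Longrightarrow>
      \<bar>(\<integral>y. p y * indicator E y \<partial>N) - (\<integral>y. p' y * indicator E y \<partial>N)\<bar> \<le> \<delta>"
proof -
  define c where "c = exp \<epsilon>"
  define d where "d = exp (-\<epsilon>)"
  have "0 < d" "d \<le> 1" "1 \<le> c" using \<open>0 \<le> \<epsilon>\<close> by (auto simp: c_def d_def)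
  have "0 \<le> \<delta>" using up[of "{}"] by simp
  define above where "above y = max 0 (p y - c * q y)" for y
  define below where "below y = max 0 (d * q y - p y)" for y
  define r where "r y = p y - above y + below y" for y
  have [measurable]: "r \<in> borel_measurable N"
    unfolding r_def above_def below_def by measurable
  have int: "integrable N above" "integrable N below" "integrable N r"
    unfolding r_def above_def below_def using p q by auto
  have nonneg: "\<And>y. 0 \<le> above y" "\<And>y. 0 \<le> below y" by (auto simp: above_def below_def)
  have r_band: "d * q y \<le> r y" "r y \<le> c * q y" for y
    using mult_right_mono[OF order.trans[OF \<open>d \<le> 1\<close> \<open>1 \<le> c\<close>] q_nonneg[of y]]
    by (auto simp: r_def above_def below_def max_def)
  have r_near_p: "p y - above y \<le> r y" "r y \<le> p y + below y" for y
    using nonneg[of y] by (auto simp: r_def)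
  define a where "a = integral\<^sup>L N above"
  define b where "b = integral\<^sup>L N below"
  have "a \<le> \<delta>"
  proof -
    define A where "A = {y\<in>space N. c * q y < p y}"
    have [measurable]: "A \<in> sets N" unfolding A_def by measurable
    have "a = (\<integral>y. p y * indicator A y - c * (q y * indicator A y) \<partial>N)"
      unfolding a_def by (intro Bochner_Integration.integral_cong)
        (auto simp: above_def A_def split: split_indicator)
    also have "\<dots> = (\<integral>y. p y * indicator A y \<partial>N) - c * (\<integral>y. q y * indicator A y \<partial>N)"
      using p q by (simp add: integrable_real_mult_indicator)
    finally show ?thesis using up[of A] by (simp add: c_def)
  qed
  have "b \<le> \<delta>"
  proof -
    define B where "B = {y\<in>space N. p y < d * q y}"
    have [measurable]: "B \<in> sets N" unfolding B_def by measurable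
    have "b = (\<integral>y. d * (q y * indicator B y) - p y * indicator B y \<partial>N)"
      unfolding b_def by (intro Bochner_Integration.integral_cong)
        (auto simp: below_def B_def split: split_indicator)
    also have "\<dots> = d * (\<integral>y. q y * indicator B y \<partial>N) - (\<integral>y. p y * indicator B y \<partial>N)"
      using p q by (simp add: integrable_real_mult_indicator)
    finally have "b \<le> d * \<delta>" using lo[of B] by (simp add: d_def algebra_simps)
    then show ?thesis using \<open>0 < d\<close> \<open>d \<le> 1\<close> \<open>0 \<le> \<delta>\<close> mult_left_le_one_le[of \<delta> d] by linarith
  qed
  have r_total: "integral\<^sup>L N r = 1 - a + b"
  proof -
    have "integral\<^sup>L N r = (\<integral>y. p y - above y \<partial>N) + integral\<^sup>L N below"
      unfolding r_def using p int by (intro Bochner_Integration.integral_add) auto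
    then show ?thesis
      using p int p1 by (simp add: a_def b_def)
  qed
  show thesis
  proof (cases "b \<le> a")
    case True
    obtain t where t: "0 \<le> t" "t \<le> 1" "(\<integral>y. r y + t * (c * q y - r y) \<partial>N) = 1"
      using integral_interpolation_eq[of N r "\<lambda>y. c * q y" 1] int q q1 r_total True \<open>1 \<le> c\<close>
      by auto
    define p' where "p' y = r y + t * (c * q y - r y)" for y
    have p'_band: "r y \<le> p' y" "p' y \<le> c * q y" for y
      unfolding p'_def using interpolation_bounds[OF r_band(2) t(1,2)] .
    have "integrable N p'" unfolding p'_def using int q by auto
    show thesis
    proof (rule that[of p'])
      show "p' \<in> borel_measurable N" unfolding p'_def by measurable
      show "integral\<^sup>L N p' = 1" using t(3) by (simp add: p'_def[abs_def])
      show "exp (-\<epsilon>) * q y \<le> p' y" for y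
        using r_band(1)[of y] p'_band(1)[of y] unfolding d_def by linarith
      show "p' y \<le> exp \<epsilon> * q y" for y
        using p'_band(2)[of y] unfolding c_def .
      show "\<bar>(\<integral>y. p y * indicator E y \<partial>N) - (\<integral>y. p' y * indicator E y \<partial>N)\<bar> \<le> \<delta>"
        if "E \<in> sets N" for E
      proof -
        have "p y - above y \<le> p' y" for y
          using r_near_p(1)[of y] p'_band(1)[of y] by linarith
        then have "\<bar>(\<integral>y. p y * indicator E y \<partial>N) - (\<integral>y. p' y * indicator E y \<partial>N)\<bar> \<le> a"
          unfolding a_def using p1 \<open>integral\<^sup>L N p' = 1\<close>
          by (intro set_integral_diff_le_defect[OF p \<open>integrable N p'\<close> int(1) _ _ nonneg(1) that])
            auto
        with \<open>a \<le> \<delta>\<close> show ?thesis by linarith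
      qed
    qed fact
  next
    case False
    obtain t where t: "0 \<le> t" "t \<le> 1" "(\<integral>y. d * q y + t * (r y - d * q y) \<partial>N) = 1"
      using integral_interpolation_eq[of N "\<lambda>y. d * q y" r 1] int q q1 r_total False \<open>d \<le> 1\<close>
      by auto
    define p' where "p' y = d * q y + t * (r y - d * q y)" for y
    have p'_band: "d * q y \<le> p' y" "p' y \<le> r y" for y
      unfolding p'_def using interpolation_bounds[OF r_band(1) t(1,2)] .
    have "integrable N p'" unfolding p'_def using int q by auto
    show thesis
    proof (rule that[of p'])
      show "p' \<in> borel_measurable N" unfolding p'_def by measurable
      show "integral\<^sup>L N p' = 1" using t(3) by (simp add: p'_def[abs_def])
      show "exp (-\<epsilon>) * q y \<le> p' y" for y
        using p'_band(1)[of y] unfolding d_def .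
      show "p' y \<le> exp \<epsilon> * q y" for y
        using r_band(2)[of y] p'_band(2)[of y] unfolding c_def by linarith
      show "\<bar>(\<integral>y. p y * indicator E y \<partial>N) - (\<integral>y. p' y * indicator E y \<partial>N)\<bar> \<le> \<delta>"
        if "E \<in> sets N" for E
      proof -
        have "p' y - below y \<le> p y" for y
          using r_near_p(2)[of y] p'_band(2)[of y] by linarith
        then have "\<bar>(\<integral>y. p' y * indicator E y \<partial>N) - (\<integral>y. p y * indicator E y \<partial>N)\<bar> \<le> b"
          unfolding b_def using p1 \<open>integral\<^sup>L N p' = 1\<close>
          by (intro set_integral_diff_le_defect[OF \<open>integrable N p'\<close> p int(2) _ _ nonneg(2) that])
            auto
        with \<open>b \<le> \<delta>\<close> show ?thesis by linarith
      qed
    qed fact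
  qed
qed

lemma prob_space_density_real:
  fixes f :: "'a \<Rightarrow> real"
  assumes [measurable]: "f \<in> borel_measurable N" and "\<And>y. 0 \<le> f y"
    and "integrable N f" and "integral\<^sup>L N f = 1"
  shows "prob_space (density N f)"
proof (rule prob_spaceI)
  have "emeasure (density N f) (space N) = ennreal (\<integral>y. f y * indicator (space N) y \<partial>N)"
    using assms by (intro emeasure_density_real) auto
  also have "\<dots> = 1"
    using assms(4) by (simp cong: Bochner_Integration.integral_cong)
  finally show "emeasure (density N f) (space (density N f)) = 1" by simp
qed

lemma indist_zero_density_band:
  fixes f g :: "'a \<Rightarrow> real"
  assumes [measurable]: "f \<in> borel_measurable N" "g \<in> borel_measurable N"
    and f_nonneg: "\<And>y. 0 \<le> f y" and g_nonneg: "\<And>y. 0 \<le> g y"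
    and f: "integrable N f" and g: "integrable N g" and sets_N: "sets N = sets M"
    and lower: "\<And>y. exp (-\<epsilon>) * g y \<le> f y" and upper: "\<And>y. f y \<le> exp \<epsilon> * g y"
  shows "indist M \<epsilon> 0 (density N f) (density N g)"
  unfolding indist_def
proof (intro ballI conjI)
  fix E assume "E \<in> sets M"
  then have E: "E \<in> sets N" using sets_N by simp
  have iE: "integrable N (\<lambda>y. g y * indicator E y)" "integrable N (\<lambda>y. f y * indicator E y)"
    using f g E by (auto intro: integrable_real_mult_indicator)
  have "exp (-\<epsilon>) * (\<integral>y. g y * indicator E y \<partial>N) \<le> (\<integral>y. f y * indicator E y \<partial>N)"
    using iE lower by (subst integral_mult_right_zero[symmetric])
      (intro integral_mono, auto split: split_indicator)
  moreover have "(\<integral>y. f y * indicator E y \<partial>N) \<le> exp \<epsilon> * (\<integral>y. g y * indicator E y \<partial>N)"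
    using iE upper by (subst integral_mult_right_zero[symmetric])
      (intro integral_mono, auto split: split_indicator)
  ultimately show "exp (-\<epsilon>) * (measure (density N g) E - 0) \<le> measure (density N f) E"
    and "measure (density N f) E \<le> exp \<epsilon> * measure (density N g) E + 0"
    using E f g f_nonneg g_nonneg by (simp_all add: measure_density_real)
qed

lemma indist_purify:
  assumes P_dist: "is_dist M P" and Q_dist: "is_dist M Q"
    and PQ: "indist M \<epsilon> \<delta> P Q" and "0 \<le> \<epsilon>"
  obtains P' where "is_dist M P'" "indist M \<epsilon> 0 P' Q" "TV M P P' \<le> \<delta>"
proof -
  have P: "prob_space P" "sets P = sets M" and Q: "prob_space Q" "sets Q = sets M"
    using P_dist Q_dist by (auto simp: is_dist_def)
  define N where "N = sup_measure' P Q"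
  have sets_N: "sets N = sets M" and sets_QP: "sets Q = sets P"
    using P Q by (simp_all add: N_def)
  note N = sup_measure'_dominates[OF P(1) Q(1) sets_QP, folded N_def]
  obtain p where p_meas[measurable]: "p \<in> borel_measurable N"
    and p_nonneg: "\<And>y. 0 \<le> p y" and p: "integrable N p" and P_eq: "P = density N p"
    using absolutely_continuous_real_density[OF N(1) P(1) _ N(2)] sets_N P(2) by metis
  obtain q where q_meas[measurable]: "q \<in> borel_measurable N"
    and q_nonneg: "\<And>y. 0 \<le> q y" and q: "integrable N q" and Q_eq: "Q = density N q"
    using absolutely_continuous_real_density[OF N(1) Q(1) _ N(3)] sets_N Q(2) by metis
  have measure_P: "measure P E = (\<integral>y. p y * indicator E y \<partial>N)"
    and measure_Q: "measure Q E = (\<integral>y. q y * indicator E y \<partial>N)" if "E \<in> sets N" for E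
    using that p q p_nonneg q_nonneg by (simp_all add: P_eq Q_eq measure_density_real)
  have total: "integral\<^sup>L N f = measure (density N f) (space N)"
    if "f \<in> borel_measurable N" "\<And>y. 0 \<le> f y" "integrable N f" for f :: "_ \<Rightarrow> real"
    using that by (simp add: measure_density_real cong: Bochner_Integration.integral_cong)
  have p1: "integral\<^sup>L N p = 1" and q1: "integral\<^sup>L N q = 1"
    using total[OF _ p_nonneg p] total[OF _ q_nonneg q] P(1) Q(1)
      prob_space.prob_space[of P] prob_space.prob_space[of Q] P_eq Q_eq
    by simp_all
  obtain p' where [measurable]: "p' \<in> borel_measurable N" and p': "integrable N p'"
    and p'1: "integral\<^sup>L N p' = 1"
    and lower: "\<And>y. exp (-\<epsilon>) * q y \<le> p' y" and upper: "\<And>y. p' y \<le> exp \<epsilon> * q y"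
    and close: "\<And>E. E \<in> sets N \<Longrightarrow>
      \<bar>(\<integral>y. p y * indicator E y \<partial>N) - (\<integral>y. p' y * indicator E y \<partial>N)\<bar> \<le> \<delta>"
  proof (rule density_into_ratio_band[OF p_meas q_meas q_nonneg p q p1 q1 _ _ \<open>0 \<le> \<epsilon>\<close>])
    fix E assume "E \<in> sets N"
    with PQ show "(\<integral>y. p y * indicator E y \<partial>N) \<le> exp \<epsilon> * (\<integral>y. q y * indicator E y \<partial>N) + \<delta>"
      and "exp (-\<epsilon>) * ((\<integral>y. q y * indicator E y \<partial>N) - \<delta>) \<le> (\<integral>y. p y * indicator E y \<partial>N)"
      using sets_N by (simp_all add: indist_def flip: measure_P measure_Q)
  qed blast
  have p'_nonneg: "0 \<le> p' y" for y
    using lower[of y] q_nonneg[of y] by (meson exp_ge_zero mult_nonneg_nonneg order_trans)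
  show thesis
  proof (rule that[of "density N p'"])
    show "is_dist M (density N p')"
      using prob_space_density_real[OF _ p'_nonneg p' p'1] sets_N by (simp add: is_dist_def)
    show "indist M \<epsilon> 0 (density N p') Q"
      unfolding Q_eq
      by (rule indist_zero_density_band) (use p'_nonneg q_nonneg p' q sets_N lower upper in auto)
    show "TV M P (density N p') \<le> \<delta>"
      unfolding TV_def
    proof (rule cSUP_least)
      show "sets M \<noteq> {}" by blast
      show "\<bar>measure P E - measure (density N p') E\<bar> \<le> \<delta>" if "E \<in> sets M" for E
        using that close[of E] measure_P[of E] measure_density_real[OF _ p'_nonneg p', of E] sets_N
        by simp
    qed
  qed
qed

theorem lemma3p7:
  fixes M :: "'s measure" and R :: "'d \<Rightarrow> 's measure" and \<rho> :: "'s measure"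
    and \<epsilon> \<delta> :: real
  assumes "0 \<le> \<epsilon>"
    and "deletion_DP_LR M \<epsilon> \<delta> R \<rho>"
  shows "\<exists>R' :: 'd \<Rightarrow> 's measure.
           deletion_DP_LR M \<epsilon> 0 R' \<rho> \<and>
           (\<forall>x. TV M (R x) (R' x) \<le> \<delta>) \<and>
           replacement_DP_LR M (2 * \<epsilon>) 0 R'"
proof -
  have \<rho>: "is_dist M \<rho>" and R: "\<And>x. is_dist M (R x)" "\<And>x. indist M \<epsilon> \<delta> (R x) \<rho>"
    using assms(2) unfolding deletion_DP_LR_def by auto
  have "\<forall>x. \<exists>P'. is_dist M P' \<and> indist M \<epsilon> 0 P' \<rho> \<and> TV M (R x) P' \<le> \<delta>"
    using indist_purify[OF R(1) \<rho> R(2) assms(1)] by metis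
  then obtain R' where R': "\<And>x. is_dist M (R' x)" "\<And>x. indist M \<epsilon> 0 (R' x) \<rho>"
    "\<And>x. TV M (R x) (R' x) \<le> \<delta>"
    by metis
  have "deletion_DP_LR M \<epsilon> 0 R' \<rho>"
    using \<rho> R' by (simp add: deletion_DP_LR_def)
  moreover have "replacement_DP_LR M (2 * \<epsilon>) 0 R'"
    using R' by (auto simp: replacement_DP_LR_def intro: indist_zero_common_reference)
  ultimately show ?thesis
    using R'(3) by blast
qed

end
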